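(* Let $k\ge d$, let $\widetilde{\mathbf X}\in\mathbb R^{k\times d}$ have rows $(\widetilde{\mathbf x}_1,\dots,\widetilde{\mathbf x}_k)\sim\mathrm{VS}_{D_{\mathcal X}}^k$ and let $\mathbf X\in\mathbb R^{k\times d}$ have rows $(\mathbf x_1,\dots,\mathbf x_k)\sim D_{\mathcal X}^k$. Then for every positive definite $\boldsymbol\Sigma\in\mathbb R^{d\times d}$, the conditional distribution of $\widetilde{\mathbf X}$ given $\widetilde{\mathbf X}^\top\widetilde{\mathbf X}=\boldsymbol\Sigma$ is the same as the conditional distribution of $\mathbf X$ given $\mathbf X^\top\mathbf X=\boldsymbol\Sigma$; here conditioning on $\mathbf M=\boldsymbol\Sigma$ is understood as the limit $\epsilon\to0$ of conditioning on $\{\|\mathbf M-\boldsymbol\Sigma\|\le\epsilon\}$ ($\|\cdot\|$ the spectral norm), i.e. for every measurable $A$ for which these conditioning events have positive probability and $\lim_{\epsilon\to0}\Pr(\mathbf X\in A\mid\|\mathbf X^\top\mathbf X-\boldsymbol\Sigma\|\le\epsilon)$ exists, the limit $\lim_{\epsilon\to0}\Pr(\widetilde{\mathbf X}\in A\mid\|\widetilde{\mathbf X}^\top\widetilde{\mathbf X}-\boldsymbol\Sigma\|\le\epsilon)$ exists and equals it.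
   Context: $D_{\mathcal X}$ is a probability distribution on $\mathbb R^d$ with $\mathbb E\|\mathbf x\|^2<\infty$ and invertible $\boldsymbol\Sigma_{D_{\mathcal X}}:=\mathbb E[\mathbf x\mathbf x^\top]$; $D_{\mathcal X}^k$ is the law of $k$ i.i.d. draws. $\mathrm{VS}_{D_{\mathcal X}}^k(A)=\mathbb E_{D_{\mathcal X}^k}[\mathbf 1_A\det(\sum_{i=1}^k\mathbf x_i\mathbf x_i^\top)]/\big(d!\binom kd\det(\boldsymbol\Sigma_{D_{\mathcal X}})\big)$ for measurable $A\subseteq(\mathbb R^d)^k$. *)

theory Defs
  imports "HOL-Probability.Probability"
begin

text \<open>A sample of k points of R^d is a function xs :: 'k => real^'d (rows of X are xs i).
  D^k is the product measure of k copies of D.\<close>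

definition iid :: "(real^'d) measure \<Rightarrow> ('k::finite \<Rightarrow> real^'d) measure"
  where "iid D = PiM (UNIV :: 'k set) (\<lambda>_. D)"

definition gram :: "('k::finite \<Rightarrow> real^'d::finite) \<Rightarrow> real^'d^'d"
  where "gram xs = (\<chi> i j. \<Sum>l\<in>UNIV. xs l $ i * xs l $ j)"

definition second_moment :: "(real^'d::finite) measure \<Rightarrow> real^'d^'d"
  where "second_moment D = (\<chi> i j. \<integral>x. x $ i * x $ j \<partial>D)"

definition VS :: "(real^'d::finite) measure \<Rightarrow> ('k::finite \<Rightarrow> real^'d) measure"
  where "VS D = density (iid D)
     (\<lambda>xs. ennreal (det (gram xs) /
        (fact CARD('d) * real (CARD('k) choose CARD('d)) * det (second_moment D))))"

definition spec_norm :: "real^'d::finite^'d \<Rightarrow> real"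
  where "spec_norm M = onorm (\<lambda>v. M *v v)"

definition pos_def :: "real^'d::finite^'d \<Rightarrow> bool"
  where "pos_def S \<longleftrightarrow> transpose S = S \<and> (\<forall>v. v \<noteq> 0 \<longrightarrow> v \<bullet> (S *v v) > 0)"

definition near_event :: "('k::finite \<Rightarrow> real^'d::finite) measure \<Rightarrow> real^'d^'d \<Rightarrow> real
    \<Rightarrow> ('k \<Rightarrow> real^'d) set"
  where "near_event M S e = {xs \<in> space M. spec_norm (gram xs - S) \<le> e}"

definition cond_prob :: "'a measure \<Rightarrow> 'a set \<Rightarrow> 'a set \<Rightarrow> real"
  where "cond_prob M A B = measure M (A \<inter> B) / measure M B"

end

theory Submission
  imports Defs
begin

text \<open>
  The density of VS^k_D with respect to D^k is det(X^T X) divided by the constant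
  d! (k choose d) det Sigma_D. By continuity of the determinant, on the event
  ||X^T X - Sigma|| <= e this density lies within a factor 1 +- delta(e) of the constant
  det Sigma / (d! (k choose d) det Sigma_D), with delta(e) -> 0, and reweighting by a
  density that is almost constant on the conditioning event moves conditional
  probabilities by at most 4 delta(e). The constant is positive because the conditioning
  events have positive VS-probability.
\<close>

lemma abs_divide_diff_le_of_proportional:
  fixes a b p d v w :: real
  assumes "0 \<le> a" "a \<le> b" "0 < b" "0 < p" "0 < d" "d \<le> 1/2"
    and "(1-d)*p*a \<le> v" "v \<le> (1+d)*p*a" "(1-d)*p*b \<le> w" "w \<le> (1+d)*p*b"
  shows "\<bar>v/w - a/b\<bar> \<le> 4*d"
proof -
  have lower_b: "0 < (1-d)*p*b" and lower_a: "0 \<le> (1-d)*p*a" using assms by simp_all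
  have w_pos: "0 < w" and v_nonneg: "0 \<le> v" using assms lower_a lower_b by linarith+
  have r: "0 \<le> a/b" "a/b \<le> 1" using assms by auto
  have dd: "d*d \<le> d*(1/2)" using assms by (intro mult_left_mono) auto
  have "v/w \<le> ((1+d)*p*a)/((1-d)*p*b)"
    by (rule frac_le) (use assms w_pos v_nonneg lower_b in auto)
  also have "\<dots> = (a/b) * ((1+d)/(1-d))" using assms by (simp add: field_simps)
  also have "\<dots> \<le> (a/b) * (1 + 4*d)"
  proof (rule mult_left_mono[OF _ r(1)])
    have "1+d \<le> (1+4*d)*(1-d)" using dd by (simp add: algebra_simps)
    then show "(1+d)/(1-d) \<le> 1 + 4*d" using assms by (simp add: pos_divide_le_eq)
  qed
  finally have upper: "v/w \<le> a/b + (a/b)*(4*d)" by (simp add: algebra_simps)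
  have "(a/b) * (1 - 4*d) \<le> (a/b) * ((1-d)/(1+d))"
  proof (rule mult_left_mono[OF _ r(1)])
    have "(1-4*d)*(1+d) \<le> 1-d" using dd assms by (simp add: algebra_simps)
    then show "1 - 4*d \<le> (1-d)/(1+d)" using assms by (simp add: pos_le_divide_eq)
  qed
  also have "\<dots> = ((1-d)*p*a)/((1+d)*p*b)"
    using assms by (simp add: field_simps add_pos_pos order.strict_implies_not_eq[symmetric])
  also have "\<dots> \<le> v/w"
    by (rule frac_le[OF v_nonneg]) (use assms w_pos in auto)
  finally have lower: "a/b - (a/b)*(4*d) \<le> v/w" by (simp add: algebra_simps)
  have "(a/b)*(4*d) \<le> 4*d" using r assms by (intro mult_left_le_one_le) auto
  then show ?thesis using upper lower by (simp add: abs_le_iff)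
qed

lemma norm_le_card_spec_norm:
  fixes M :: "real^'d::finite^'d"
  shows "norm M \<le> real (CARD('d) * CARD('d)) * spec_norm M"
proof -
  have "norm M \<le> (\<Sum>i\<in>UNIV. norm (M$i))"
    unfolding norm_vec_def by (rule L2_set_le_sum) simp
  also have "\<dots> \<le> (\<Sum>i\<in>UNIV. \<Sum>j\<in>UNIV. \<bar>M$i$j\<bar>)"
    by (intro sum_mono norm_le_l1_cart)
  also have "\<dots> \<le> (\<Sum>i\<in>(UNIV::'d set). \<Sum>j\<in>(UNIV::'d set). spec_norm M)"
    unfolding spec_norm_def by (intro sum_mono matrix_component_le_onorm)
  finally show ?thesis by simp
qed

lemma isCont_det: "isCont (det :: real^'n::finite^'n \<Rightarrow> real) S"
proof -
  have "isCont (\<lambda>A::real^'n^'n. A$i$j) S" for i j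
    by (intro linear_continuous_at bounded_linear_compose[OF bounded_linear_vec_nth bounded_linear_vec_nth])
  then show ?thesis
    unfolding det_def[abs_def] by (intro continuous_intros)
qed

lemma det_ratio_near:
  fixes S :: "real^'d::finite^'d"
  assumes "det S \<noteq> 0" and "0 < d"
  shows "\<exists>\<eta>>0. \<forall>M. spec_norm (M - S) < \<eta> \<longrightarrow> \<bar>det M / det S - 1\<bar> < d"
proof -
  define K where "K = real (CARD('d) * CARD('d))"
  have K: "K > 0" unfolding K_def by simp
  have "isCont (\<lambda>M. det M / det S) S" using assms(1) by (intro continuous_intros isCont_det)
  then obtain \<eta> where "\<eta> > 0" "\<forall>M. dist M S < \<eta> \<longrightarrow> dist (det M / det S) (det S / det S) < d"
    using assms(2) unfolding continuous_at_eps_delta by blast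
  then have \<eta>: "\<eta> > 0" "\<And>M. dist M S < \<eta> \<Longrightarrow> \<bar>det M / det S - 1\<bar> < d"
    using assms(1) by (auto simp: dist_real_def)
  show ?thesis
  proof (intro exI[of _ "\<eta>/K"] conjI allI impI)
    show "\<eta>/K > 0" using \<eta>(1) K by simp
    fix M :: "real^'d^'d"
    assume "spec_norm (M - S) < \<eta>/K"
    with norm_le_card_spec_norm[of "M - S"] K have "dist M S < \<eta>"
      by (simp add: dist_norm K_def pos_less_divide_eq mult.commute)
    then show "\<bar>det M / det S - 1\<bar> < d" by (rule \<eta>(2))
  qed
qed

lemma pos_def_det_nonzero:
  fixes S :: "real^'d::finite^'d"
  assumes "pos_def S"
  shows "det S \<noteq> 0"
proof -
  have "S *v x = 0 \<Longrightarrow> x = 0" for x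
    using assms unfolding pos_def_def by (metis inner_zero_right less_irrefl)
  then have "inj ((*v) S)" by (simp add: linear_injective_0)
  then show ?thesis using det_nz_iff_inj[of "(*v) S"] by simp
qed

lemma measure_density_bounds:
  fixes f :: "'a \<Rightarrow> real"
  assumes "finite_measure M" and f: "f \<in> borel_measurable M" and X: "X \<in> sets M"
    and "0 \<le> a" "a \<le> b" and bounds: "\<And>x. x \<in> X \<Longrightarrow> a \<le> f x \<and> f x \<le> b"
  shows "a * measure M X \<le> measure (density M (\<lambda>x. ennreal (f x))) X"
    and "measure (density M (\<lambda>x. ennreal (f x))) X \<le> b * measure M X"
proof -
  interpret finite_measure M by fact
  let ?N = "density M (\<lambda>x. ennreal (f x))"
  have N: "emeasure ?N X = (\<integral>\<^sup>+x. ennreal (f x) * indicator X x \<partial>M)"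
    using f X by (intro emeasure_density) auto
  have "emeasure ?N X \<le> (\<integral>\<^sup>+x. ennreal b * indicator X x \<partial>M)"
    unfolding N by (intro nn_integral_mono) (auto simp: indicator_def bounds ennreal_leI)
  also have "\<dots> = ennreal b * emeasure M X"
    using X by (rule nn_integral_cmult_indicator)
  also have "\<dots> = ennreal (b * measure M X)"
    using \<open>0 \<le> a\<close> \<open>a \<le> b\<close> by (simp add: emeasure_eq_measure ennreal_mult)
  finally have upper: "emeasure ?N X \<le> ennreal (b * measure M X)" .
  have "ennreal (a * measure M X) = ennreal a * emeasure M X"
    using \<open>0 \<le> a\<close> by (simp add: emeasure_eq_measure ennreal_mult)
  also have "\<dots> = (\<integral>\<^sup>+x. ennreal a * indicator X x \<partial>M)"
    using X by (rule nn_integral_cmult_indicator[symmetric])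
  also have "\<dots> \<le> emeasure ?N X"
    unfolding N by (intro nn_integral_mono) (auto simp: indicator_def bounds ennreal_leI)
  finally have lower: "ennreal (a * measure M X) \<le> emeasure ?N X" .
  have "emeasure ?N X = ennreal (measure ?N X)"
    using upper by (intro emeasure_eq_ennreal_measure) (auto simp: top_unique)
  then show "a * measure M X \<le> measure ?N X" "measure ?N X \<le> b * measure M X"
    using upper lower \<open>0 \<le> a\<close> \<open>a \<le> b\<close> by (simp_all add: ennreal_le_iff)
qed

lemma cond_prob_density_close:
  fixes f :: "'a \<Rightarrow> real"
  assumes M: "finite_measure M" and f: "f \<in> borel_measurable M" and A: "A \<in> sets M"
    and "0 < p" "0 < d" "d \<le> 1/2"
    and near_p: "\<And>x. x \<in> B \<Longrightarrow> (1-d)*p \<le> f x \<and> f x \<le> (1+d)*p"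
  shows "\<bar>cond_prob (density M (\<lambda>x. ennreal (f x))) A B - cond_prob M A B\<bar> \<le> 4*d"
proof -
  interpret finite_measure M by fact
  let ?N = "density M (\<lambda>x. ennreal (f x))"
  have "0 \<le> (1-d)*p" "(1-d)*p \<le> (1+d)*p" using assms by simp_all
  note bounds = measure_density_bounds[OF M f _ this]
  show ?thesis
  proof (cases "B \<in> sets M \<and> measure M B > 0")
    case True
    then have B: "B \<in> sets M" "measure M B > 0" by auto
    have AB: "A \<inter> B \<in> sets M" using A B by blast
    have "measure M (A \<inter> B) \<le> measure M B" using B by (intro finite_measure_mono) auto
    then show ?thesis unfolding cond_prob_def
      using bounds[OF AB] bounds[OF B(1)] near_p assms(4-6) B(2)
      by (intro abs_divide_diff_le_of_proportional) auto
  next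
    case False
    then have "measure M B = 0" using measure_notin_sets[of B M] measure_nonneg[of M B] by force
    moreover have "measure ?N B = 0"
      using \<open>measure M B = 0\<close> bounds[of B] near_p measure_nonneg[of ?N B]
      by (cases "B \<in> sets M") (auto simp: measure_notin_sets)
    ultimately show ?thesis unfolding cond_prob_def using assms by simp
  qed
qed

lemma ex_pos_of_measure_density_pos:
  fixes f :: "'a \<Rightarrow> real"
  assumes f: "f \<in> borel_measurable M" and pos: "measure (density M (\<lambda>x. ennreal (f x))) B > 0"
  shows "\<exists>x\<in>B. f x > 0"
proof (rule ccontr)
  assume "\<not> (\<exists>x\<in>B. f x > 0)"
  then have nonpos: "\<And>x. x \<in> B \<Longrightarrow> f x \<le> 0" by auto
  have "B \<in> sets M" using pos by (metis measure_notin_sets sets_density less_irrefl)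
  then have "emeasure (density M (\<lambda>x. ennreal (f x))) B = (\<integral>\<^sup>+x. ennreal (f x) * indicator B x \<partial>M)"
    using f by (intro emeasure_density) auto
  also have "\<dots> = 0"
    using nonpos by (intro nn_integral_zero') (auto simp: indicator_def ennreal_eq_0_iff)
  finally show False using pos by (simp add: measure_def)
qed

lemma tendsto_at_right_of_close:
  fixes f g :: "real \<Rightarrow> real"
  assumes close: "\<And>d. 0 < d \<Longrightarrow> \<exists>\<eta>>0. \<forall>e. 0 < e \<and> e < \<eta> \<longrightarrow> \<bar>f e - g e\<bar> \<le> d"
    and g: "(g \<longlongrightarrow> L) (at_right 0)"
  shows "(f \<longlongrightarrow> L) (at_right 0)"
proof -
  have "((\<lambda>e. f e - g e) \<longlongrightarrow> 0) (at_right 0)"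
  proof (rule tendstoI)
    fix \<epsilon> :: real
    assume "0 < \<epsilon>"
    then obtain \<eta> where "\<eta> > 0" "\<forall>e. 0 < e \<and> e < \<eta> \<longrightarrow> \<bar>f e - g e\<bar> \<le> \<epsilon>/2"
      using close[of "\<epsilon>/2"] by auto
    then show "\<forall>\<^sub>F e in at_right 0. dist (f e - g e) 0 < \<epsilon>"
      using \<open>0 < \<epsilon>\<close> by (intro eventually_at_rightI[of 0 \<eta>]) auto
  qed
  from tendsto_add[OF this g] show ?thesis by simp
qed

definition VS_normalizer :: "(real^'d::finite) measure \<Rightarrow> 'k::finite itself \<Rightarrow> real"
  where "VS_normalizer D _ = fact CARD('d) * real (CARD('k) choose CARD('d)) * det (second_moment D)"

lemma VS_eq_density:
  "(VS D :: ('k::finite \<Rightarrow> real^'d::finite) measure) =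
    density (iid D) (\<lambda>xs. ennreal (det (gram xs) / VS_normalizer D TYPE('k)))"
  by (simp add: VS_def VS_normalizer_def)

lemma zero_less_divide_VS_normalizer_iff:
  fixes D :: "(real^'d::finite) measure"
  shows "0 < x / VS_normalizer D TYPE('k::finite) \<longleftrightarrow>
    CARD('d) \<le> CARD('k) \<and> 0 < x / det (second_moment D)"
proof (cases "CARD('d) \<le> CARD('k)")
  case True
  define c :: real where "c = fact CARD('d) * real (CARD('k) choose CARD('d))"
  have "c > 0" using True by (simp add: c_def)
  have "x / VS_normalizer D TYPE('k) = (x / det (second_moment D)) / c"
    by (simp add: VS_normalizer_def c_def ac_simps)
  then show ?thesis using True by (simp only: pos_less_divide_eq[OF \<open>c > 0\<close>] mult_zero_left) simp
qed (simp add: VS_normalizer_def binomial_eq_0)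

lemma near_event_VS: "near_event (VS D) S e = near_event (iid D) S e"
  by (simp add: near_event_def VS_def)

lemma borel_measurable_det_gram:
  assumes "sets D = sets borel"
  shows "(\<lambda>xs. det (gram xs)) \<in> borel_measurable (iid D :: ('k::finite \<Rightarrow> real^'d::finite) measure)"
proof -
  have "(\<lambda>x::real^'d. x $ i) \<in> borel_measurable D" for i
    using measurable_cong_sets[OF assms refl]
      borel_measurable_continuous_onI[OF linear_continuous_on[OF bounded_linear_vec_nth]] by blast
  then have "(\<lambda>xs. xs l $ i) \<in> borel_measurable (iid D :: ('k \<Rightarrow> real^'d) measure)" for l i
    unfolding iid_def by (rule measurable_compose[OF measurable_component_singleton, rotated]) simp
  then show ?thesis
    unfolding det_def gram_def by (simp add: borel_measurable_sum borel_measurable_prod borel_measurable_times)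
qed

lemma det_gram_ratio_near:
  fixes S :: "real^'d::finite^'d" and M :: "('k::finite \<Rightarrow> real^'d) measure"
  assumes "det S \<noteq> 0" and "0 < d"
  shows "\<exists>\<eta>>0. \<forall>e<\<eta>. \<forall>xs\<in>near_event M S e. \<bar>det (gram xs) / det S - 1\<bar> < d"
proof -
  obtain \<eta> where "\<eta> > 0" "\<forall>N. spec_norm (N - S) < \<eta> \<longrightarrow> \<bar>det N / det S - 1\<bar> < d"
    using det_ratio_near[OF assms] by blast
  then show ?thesis unfolding near_event_def by force
qed

lemma VS_normalizer_sign:
  fixes D :: "(real^'d::finite) measure" and S :: "real^'d^'d"
  assumes "sets D = sets borel" and "det S \<noteq> 0"
    and pos: "\<forall>e>0. measure (VS D :: ('k::finite \<Rightarrow> real^'d) measure) (near_event (VS D) S e) > 0"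
  shows "0 < det S / VS_normalizer D TYPE('k)"
proof -
  define C where "C = VS_normalizer D TYPE('k)"
  obtain \<eta> where "\<eta> > 0"
    and near: "\<forall>e<\<eta>. \<forall>xs\<in>near_event (iid D :: ('k \<Rightarrow> real^'d) measure) S e.
      \<bar>det (gram xs) / det S - 1\<bar> < 1/2"
    using det_gram_ratio_near[OF assms(2), where d="1/2" and M="iid D :: ('k \<Rightarrow> real^'d) measure"]
    by auto
  have "measure (VS D :: ('k \<Rightarrow> real^'d) measure) (near_event (iid D) S (\<eta>/2)) > 0"
    using pos \<open>\<eta> > 0\<close> by (simp flip: near_event_VS)
  then have "measure (density (iid D) (\<lambda>xs::'k \<Rightarrow> real^'d. ennreal (det (gram xs) / C)))
      (near_event (iid D) S (\<eta>/2)) > 0"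
    unfolding VS_eq_density C_def .
  moreover have "(\<lambda>xs. det (gram xs) / C) \<in> borel_measurable (iid D :: ('k \<Rightarrow> real^'d) measure)"
    using borel_measurable_det_gram[OF assms(1)] by (rule borel_measurable_divide) simp
  ultimately obtain xs :: "'k \<Rightarrow> real^'d" where xs: "xs \<in> near_event (iid D) S (\<eta>/2)"
    and "det (gram xs) / C > 0"
    using ex_pos_of_measure_density_pos by blast
  moreover have "det (gram xs) / det S > 0"
  proof -
    have "\<eta>/2 < \<eta>" using \<open>\<eta> > 0\<close> by simp
    then have "\<bar>det (gram xs) / det S - 1\<bar> < 1/2" using near xs by blast
    then show ?thesis by linarith
  qed
  moreover have "det S / C = (det (gram xs) / C) / (det (gram xs) / det S)"
    using calculation assms(2) by (auto simp: field_simps)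
  ultimately show ?thesis unfolding C_def by (metis divide_pos_pos)
qed

lemma cond_prob_VS_iid_close:
  fixes D :: "(real^'d::finite) measure" and S :: "real^'d^'d"
    and A :: "('k::finite \<Rightarrow> real^'d) set"
  assumes "prob_space D" "sets D = sets borel" "A \<in> sets (iid D)" "det S \<noteq> 0"
    and "0 < det S / VS_normalizer D TYPE('k)" and "0 < \<epsilon>"
  shows "\<exists>\<eta>>0. \<forall>e. 0 < e \<and> e < \<eta> \<longrightarrow>
    \<bar>cond_prob (VS D) A (near_event (VS D) S e) - cond_prob (iid D) A (near_event (iid D) S e)\<bar> \<le> \<epsilon>"
proof -
  define C where "C = VS_normalizer D TYPE('k)"
  define p where "p = det S / C"
  have p_pos: "p > 0" using assms(5) by (simp add: p_def C_def)
  define d where "d = min (1/2) (\<epsilon>/4)"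
  have d: "0 < d" "d \<le> 1/2" "4*d \<le> \<epsilon>" using \<open>0 < \<epsilon>\<close> by (auto simp: d_def)
  obtain \<eta> where "\<eta> > 0"
    and near: "\<forall>e<\<eta>. \<forall>xs\<in>near_event (iid D :: ('k \<Rightarrow> real^'d) measure) S e.
      \<bar>det (gram xs) / det S - 1\<bar> < d"
    using det_gram_ratio_near[OF assms(4) d(1), where M="iid D :: ('k \<Rightarrow> real^'d) measure"] by auto
  have P: "finite_measure (iid D :: ('k \<Rightarrow> real^'d) measure)"
    unfolding iid_def using assms(1) by (intro prob_space.axioms(1) prob_space_PiM) auto
  have dens: "(\<lambda>xs. det (gram xs) / C) \<in> borel_measurable (iid D :: ('k \<Rightarrow> real^'d) measure)"
    using borel_measurable_det_gram[OF assms(2)] by (rule borel_measurable_divide) simp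
  have "\<bar>cond_prob (VS D) A (near_event (VS D) S e) - cond_prob (iid D) A (near_event (iid D) S e)\<bar> \<le> 4*d"
    if "e < \<eta>" for e
  proof -
    have "(1-d)*p \<le> det (gram xs) / C \<and> det (gram xs) / C \<le> (1+d)*p"
      if "xs \<in> near_event (iid D) S e" for xs :: "'k \<Rightarrow> real^'d"
    proof -
      define r where "r = det (gram xs) / det S"
      have "\<bar>r - 1\<bar> < d" using near that \<open>e < \<eta>\<close> unfolding r_def by blast
      then have "1-d \<le> r" "r \<le> 1+d" by linarith+
      then have "(1-d)*p \<le> r*p" "r*p \<le> (1+d)*p" using p_pos by (simp_all add: mult_right_mono)
      moreover have "det (gram xs) / C = r * p" using assms(4) by (simp add: r_def p_def)
      ultimately show ?thesis by simp
    qed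
    from cond_prob_density_close[OF P dens assms(3) p_pos d(1,2) this]
    show ?thesis unfolding near_event_VS unfolding VS_eq_density C_def .
  qed
  then show ?thesis using \<open>\<eta> > 0\<close> d(3) by (intro exI[of _ \<eta>]) force
qed

theorem lemma3:
  fixes D :: "(real^'d::finite) measure"
    and S :: "real^'d^'d"
    and A :: "('k::finite \<Rightarrow> real^'d) set"
    and L :: real
  assumes "prob_space D"
    and "sets D = sets borel"
    and "integrable D (\<lambda>x. (norm x)\<^sup>2)"
    and "invertible (second_moment D)"
    and "CARD('k) \<ge> CARD('d)"
    and "pos_def S"
    and "A \<in> sets (iid D :: ('k \<Rightarrow> real^'d) measure)"
    and "\<forall>e>0. measure (iid D) (near_event (iid D) S e) > 0"
    and "\<forall>e>0. measure (VS D) (near_event (VS D) S e) > 0"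
    and "((\<lambda>e. cond_prob (iid D) A (near_event (iid D) S e)) \<longlongrightarrow> L) (at_right 0)"
  shows "((\<lambda>e. cond_prob (VS D) A (near_event (VS D) S e)) \<longlongrightarrow> L) (at_right 0)"
proof (rule tendsto_at_right_of_close[OF _ assms(10)])
  have det_S: "det S \<noteq> 0" using assms(6) by (rule pos_def_det_nonzero)
  \<comment> \<open>The index type of VS D in the positivity hypothesis is not tied to 'k,
    so the sign is passed on through det (second_moment D).\<close>
  have "0 < det S / det (second_moment D)"
    using VS_normalizer_sign[OF assms(2) det_S assms(9)] by (simp add: zero_less_divide_VS_normalizer_iff)
  then have "0 < det S / VS_normalizer D TYPE('k)"
    using assms(5) by (simp add: zero_less_divide_VS_normalizer_iff)
  then show "\<exists>\<eta>>0. \<forall>e. 0 < e \<and> e < \<eta> \<longrightarrow> \<bar>cond_prob (VS D) A (near_event (VS D) S e)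
      - cond_prob (iid D) A (near_event (iid D) S e)\<bar> \<le> \<epsilon>" if "0 < \<epsilon>" for \<epsilon>
    using cond_prob_VS_iid_close[OF assms(1,2,7) det_S _ that] by blast
qed

end
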